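(* Let $f,g\in C(\mathbb{R}_0^+\times\mathbb{R}_0^+,\mathbb{R}_0^+)$ be such that $t\mapsto f(t,s)$ and $t\mapsto g(t,s)$ are nondecreasing for every fixed $s$. Let $\phi\in C(\mathbb{R}_0^+,\mathbb{R}_0^+)$ be strictly increasing with $\lim_{x\to\infty}\phi(x)=\infty$. Let $c\in C(\mathbb{R}_0^+,\mathbb{R}^+)$ be nondecreasing. Let $\eta,w\in C(\mathbb{R}_0^+,\mathbb{R}_0^+)$ be nondecreasing with $\eta(x)>0$ and $w(x)>0$ for all $x>0$. Let $x_0$, $G$, $\Psi$ be as in the context (in particular $\int_{x_0}^\infty \frac{ds}{\eta(\phi^{-1}(s))}=\infty$). Let $\alpha\in C^1(\mathbb{R}_0^+,\mathbb{R}_0^+)$ be nondecreasing with $\alpha(t)\le t$ for all $t\ge 0$. Suppose $u\in C(\mathbb{R}_0^+,\mathbb{R}_0^+)$ satisfies $$\phi(u(t))\le c(t)+\int_0^{\alpha(t)}\big[f(t,s)\,\eta(u(s))\,w(u(s))+g(t,s)\,\eta(u(s))\big]\,ds\qquad\text{for all } t\ge 0.$$ Define $p(t)=G(c(t))+\int_0^{\alpha(t)}g(t,s)\,ds$. Then there exists $\tau>0$ such that for all $t\in[0,\tau]$, $$\Psi(p(t))+\int_0^{\alpha(t)}f(t,s)\,ds\in \Psi\big((0,\infty)\big)=\mathrm{Dom}(\Psi^{-1})$$ and $$u(t)\le \phi^{-1}\Big\{G^{-1}\Big(\Psi^{-1}\Big[\Psi(p(t))+\int_0^{\alpha(t)}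f(t,s)\,ds\Big]\Big)\Big\}.$$
   Context: $\mathbb{R}_0^+=[0,\infty)$, $\mathbb{R}^+=(0,\infty)$. $\phi^{-1}$ denotes the inverse of $\phi$, defined on $[\phi(0),\infty)$. The constant $x_0$ is a real number with $\phi(0)\le x_0<c(0)$ such that $\int_{x_0}^x\frac{ds}{\eta(\phi^{-1}(s))}<\infty$ for every $x\ge x_0$ and $\int_{x_0}^\infty\frac{ds}{\eta(\phi^{-1}(s))}=\infty$ (in the paper: $x_0>0$ may be required when $\int_0^x\frac{ds}{\eta(\phi^{-1}(s))}=\infty$, and $x_0\ge0$ is allowed when this integral is finite). Define $G:[x_0,\infty)\to[0,\infty)$ by $G(x)=\int_{x_0}^x\frac{ds}{\eta(\phi^{-1}(s))}$; it is a strictly increasing bijection with inverse $G^{-1}$. Fix $x_1>0$ and define, for $x>0$, $\Psi(x)=\int_{x_1}^x\frac{ds}{w(\phi^{-1}(G^{-1}(s)))}$; $\Psi$ is strictly increasing on $(0,\infty)$, $\Psi^{-1}$ is its inverse and $\mathrm{Dom}(\Psi^{-1})=\Psi((0,\infty))$. *)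

theory Defs
  imports "HOL-Analysis.Analysis"
begin

definition phi_inv :: "(real \<Rightarrow> real) \<Rightarrow> real \<Rightarrow> real" where
  "phi_inv phi = the_inv_into {0..} phi"

definition G_fun :: "(real \<Rightarrow> real) \<Rightarrow> (real \<Rightarrow> real) \<Rightarrow> real \<Rightarrow> real \<Rightarrow> real" where
  "G_fun eta phi x0 x = (LINT s:{x0..x}|lborel. 1 / eta (phi_inv phi s))"

definition G_inv :: "(real \<Rightarrow> real) \<Rightarrow> (real \<Rightarrow> real) \<Rightarrow> real \<Rightarrow> real \<Rightarrow> real" where
  "G_inv eta phi x0 = the_inv_into {x0..} (G_fun eta phi x0)"

definition Psi_fun :: "(real \<Rightarrow> real) \<Rightarrow> (real \<Rightarrow> real) \<Rightarrow> (real \<Rightarrow> real) \<Rightarrow> real \<Rightarrow> real \<Rightarrow> real \<Rightarrow> real" where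
  "Psi_fun w eta phi x0 x1 x =
     interval_lebesgue_integral lborel (ereal x1) (ereal x)
       (\<lambda>s. 1 / w (phi_inv phi (G_inv eta phi x0 s)))"

definition Psi_inv :: "(real \<Rightarrow> real) \<Rightarrow> (real \<Rightarrow> real) \<Rightarrow> (real \<Rightarrow> real) \<Rightarrow> real \<Rightarrow> real \<Rightarrow> real \<Rightarrow> real" where
  "Psi_inv w eta phi x0 x1 = the_inv_into {0<..} (Psi_fun w eta phi x0 x1)"

end

theory Submission
  imports Defs
begin

(* Fix T >= 0 and put a = alpha T.
   Because f, g and c are nondecreasing in t and alpha(s) <= s, the hypothesis on u
   yields, for every s in [0,a], the "frozen" inequality
       phi(u s) <= c T + integral over [0,s] of H_T,
   where H_T(r) = f(T,r) eta(u r) w(u r) + g(T,r) eta(u r).  Writing V(s) for the right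
   hand side, the function
       K(s) = Psi( G(V s) + integral over [s,a] of g(T,.) ) - integral over [0,s] of f(T,.)
   has nonpositive derivative on [0,a], since eta and w are nondecreasing and
   u(s) <= phi^{-1}(V s).  Comparing K(a) with K(0) and inverting Psi, G and phi gives the
   bound on u(T), provided the argument of Psi^{-1} lies in the range of Psi.  This
   range condition holds for small t, because the argument tends to Psi(G(c 0)) as t -> 0
   while it is at least that value, and Psi is continuous and increasing near G(c 0) > 0. *)


lemma increasing_inverse:
  fixes f :: "real \<Rightarrow> real" and a :: real
  assumes cont: "\<And>X. continuous_on {a..X} f"
    and smono: "strict_mono_on {a..} f"
    and unb: "\<And>M. \<exists>x\<ge>a. f x \<ge> M"
    and g_def: "g = the_inv_into {a..} f"
  shows "\<And>x. x \<ge> a \<Longrightarrow> g (f x) = x"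
    and "\<And>y. y \<ge> f a \<Longrightarrow> g y \<ge> a \<and> f (g y) = y"
    and "\<And>y1 y2. f a \<le> y1 \<Longrightarrow> y1 \<le> y2 \<Longrightarrow> g y1 \<le> g y2"
    and "\<And>y. y > f a \<Longrightarrow> isCont g y \<and> g y > a"
proof -
  have inj: "inj_on f {a..}" using smono by (rule strict_mono_on_imp_inj_on)
  show gf: "\<And>x. x \<ge> a \<Longrightarrow> g (f x) = x" using the_inv_into_f_f[OF inj] g_def by auto
  show fg: "g y \<ge> a \<and> f (g y) = y" if y: "y \<ge> f a" for y
  proof -
    obtain X where X: "X \<ge> a" "f X \<ge> y" using unb by blast
    obtain x where "x \<ge> a" "y = f x"
      using IVT'[of f a y X, OF y X(2) X(1) cont] by auto
    then show ?thesis using gf by auto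
  qed
  show "g y1 \<le> g y2" if "f a \<le> y1" "y1 \<le> y2" for y1 y2
  proof (rule ccontr)
    assume "\<not> g y1 \<le> g y2"
    then have "f (g y2) < f (g y1)"
      using that fg[of y1] fg[of y2] by (intro strict_mono_onD[OF smono]) auto
    then show False using that fg[of y1] fg[of y2] by auto
  qed
  show "isCont g y \<and> g y > a" if y: "y > f a" for y
  proof -
    define x where "x = g y"
    have x: "x \<ge> a" "f x = y" using fg[of y] y by (auto simp: x_def)
    have xa: "x > a" using x y by (cases "x = a") auto
    define d where "d = min ((x - a) / 2) (1/2)"
    have near: "a < z \<and> z < x + 1" if "\<bar>z - x\<bar> \<le> d" for z
      using that xa unfolding d_def abs_le_iff by auto
    have "isCont g (f x)"
    proof (rule isCont_inverse_function[where f=f and g=g and x=x])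
      show "d > 0" using xa by (simp add: d_def)
      show "g (f z) = z" if "\<bar>z - x\<bar> \<le> d" for z using gf near[OF that] by auto
      show "isCont f z" if "\<bar>z - x\<bar> \<le> d" for z
        by (rule continuous_on_interior[OF cont[of "x+1"]]) (use near[OF that] in auto)
    qed
    then show ?thesis using x xa x_def by auto
  qed
qed

lemma indefinite_integral_derivative:
  fixes h F :: "real \<Rightarrow> real"
  assumes hc: "continuous_on {b..B} h" and y: "b < y" "y < B"
    and F: "\<And>z. z \<in> {b..B} \<Longrightarrow> F z = C + integral {b..z} h"
  shows "(F has_real_derivative h y) (at y)"
proof -
  have "((\<lambda>z. integral {b..z} h) has_real_derivative h y) (at y within {b..B})"
    by (rule integral_has_real_derivative[OF hc]) (use y in auto)
  then have "((\<lambda>z. integral {b..z} h) has_real_derivative h y) (at y)"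
    using at_within_interior[of y "{b..B}"] y by auto
  then have "((\<lambda>z. C + integral {b..z} h) has_real_derivative h y) (at y)"
    using DERIV_add[OF DERIV_const] by fastforce
  then show ?thesis
    by (rule has_field_derivative_transform_within_open[where S="{b<..<B}"]) (use y F in auto)
qed

text \<open>For continuous integrands the Lebesgue integral over a compact interval agrees with
  the Henstock-Kurzweil integral, which is the one with a convenient calculus.\<close>

lemma lint_eq_integral:
  fixes h :: "real \<Rightarrow> real"
  assumes "continuous_on {a..b} h"
  shows "(LINT s:{a..b}|lborel. h s) = integral {a..b} h" and "h integrable_on {a..b}"
  using set_borel_integral_eq_integral[OF borel_integrable_atLeastAtMost'[OF assms]] by auto

lemma section_continuous:
  fixes k :: "real \<Rightarrow> real \<Rightarrow> real"
  assumes "continuous_on ({0..} \<times> {0..}) (\<lambda>(t, s). k t s)" and "T \<ge> 0"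
  shows "continuous_on {0..} (k T)"
proof -
  have "continuous_on {0..} (\<lambda>s. (\<lambda>(t, s). k t s) (T, s))"
    by (rule continuous_on_compose2[OF assms(1)]) (use assms(2) in \<open>auto intro!: continuous_intros\<close>)
  then show ?thesis by simp
qed

text \<open>If k is nonnegative and nondecreasing in its first argument and 0 \<le> alpha t \<le> t, then
  the integral of k t over [0, alpha t] is nonnegative and tends to 0 as t \<rightarrow> 0+: it is
  squeezed between 0 and the integral of k 1 over [0,t].\<close>

lemma integral_upto_alpha_vanishes:
  fixes k :: "real \<Rightarrow> real \<Rightarrow> real" and alpha :: "real \<Rightarrow> real"
  assumes k_cont: "continuous_on ({0..} \<times> {0..}) (\<lambda>(t, s). k t s)"
    and k_nonneg: "\<forall>t\<ge>0. \<forall>s\<ge>0. k t s \<ge> 0"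
    and k_mono: "\<forall>s\<ge>0. mono_on {0..} (\<lambda>t. k t s)"
    and alpha_nonneg: "\<forall>t\<ge>0. alpha t \<ge> 0"
    and alpha_le: "\<forall>t\<ge>0. alpha t \<le> t"
  shows "t \<ge> 0 \<Longrightarrow> integral {0..alpha t} (k t) \<ge> 0"
    and "((\<lambda>t. integral {0..alpha t} (k t)) \<longlongrightarrow> 0) (at 0 within {0..})"
proof -
  have int: "k t integrable_on {0..b}" if "t \<ge> 0" for t b
    using lint_eq_integral(2)[OF continuous_on_subset[OF section_continuous[OF k_cont that]]]
    by auto
  show nonneg: "integral {0..alpha t} (k t) \<ge> 0" if "t \<ge> 0" for t
    by (rule integral_nonneg[OF int[OF that]]) (use that k_nonneg in auto)
  have bound: "integral {0..alpha t} (k t) \<le> integral {0..t} (k 1)" if t: "t \<in> {0..1}" for t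
  proof -
    have at: "0 \<le> alpha t" "alpha t \<le> t" using alpha_nonneg alpha_le t by auto
    have "integral {0..alpha t} (k t) \<le> integral {0..alpha t} (k 1)"
    proof (rule integral_le[OF int int])
      show "k t r \<le> k 1 r" if "r \<in> {0..alpha t}" for r
        using mono_onD[OF k_mono[rule_format, of r], of t 1] that t by auto
    qed (use t in auto)
    also have "\<dots> \<le> integral {0..t} (k 1)"
      by (rule integral_subset_le) (use at int k_nonneg in auto)
    finally show ?thesis .
  qed
  have "continuous_on {0..1} (\<lambda>t. integral {0..t} (k 1))"
    by (rule indefinite_integral_continuous_1[OF int]) simp
  then have "((\<lambda>t. integral {0..t} (k 1)) \<longlongrightarrow> integral {0..0} (k 1)) (at 0 within {0..1})"
    unfolding continuous_on_def by (rule bspec) simp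
  then have upper: "((\<lambda>t. integral {0..t} (k 1)) \<longlongrightarrow> 0) (at 0 within {0..1})" by simp
  have ev_nonneg: "\<forall>\<^sub>F t in at 0 within {0..1}. 0 \<le> integral {0..alpha t} (k t)"
    by (simp add: eventually_at_filter nonneg)
  have ev_bound: "\<forall>\<^sub>F t in at 0 within {0..1}. integral {0..alpha t} (k t) \<le> integral {0..t} (k 1)"
    by (simp add: eventually_at_filter bound)
  have "at (0::real) within {0..1} = at 0 within {0..}"
    by (rule at_within_nhd[of 0 "{..<1}"]) auto
  then show "((\<lambda>t. integral {0..alpha t} (k t)) \<longlongrightarrow> 0) (at 0 within {0..})"
    using tendsto_sandwich[OF ev_nonneg ev_bound tendsto_const upper] by simp
qed


section \<open>The functions G and Psi\<close>

locale bihari_functions =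
  fixes phi eta w :: "real \<Rightarrow> real" and x0 x1 :: real
  assumes phi_cont: "continuous_on {0..} phi"
    and phi_strict: "strict_mono_on {0..} phi"
    and phi_lim: "filterlim phi at_top at_top"
    and eta_cont: "continuous_on {0..} eta"
    and eta_nonneg: "\<forall>x\<ge>0. eta x \<ge> 0"
    and eta_mono: "mono_on {0..} eta"
    and eta_pos: "\<forall>x>0. eta x > 0"
    and w_cont: "continuous_on {0..} w"
    and w_mono: "mono_on {0..} w"
    and w_pos: "\<forall>x>0. w x > 0"
    and w_nonneg: "\<forall>x\<ge>0. w x \<ge> 0"
    and x0_ge: "phi 0 \<le> x0"
    and G_finite: "\<forall>x\<ge>x0. set_integrable lborel {x0..x} (\<lambda>s. 1 / eta (phi_inv phi s))"
    and G_infinite: "(\<integral>\<^sup>+ s\<in>{x0..}. ennreal (1 / eta (phi_inv phi s)) \<partial>lborel) = \<infinity>"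
    and x1_pos: "x1 > 0"
begin

abbreviation "pinv \<equiv> phi_inv phi"
abbreviation "gam s \<equiv> 1 / eta (pinv s)"
abbreviation "G \<equiv> G_fun eta phi x0"
abbreviation "Gi \<equiv> G_inv eta phi x0"
abbreviation "psi s \<equiv> 1 / w (pinv (Gi s))"
abbreviation "Psi \<equiv> Psi_fun w eta phi x0 x1"
abbreviation "Psii \<equiv> Psi_inv w eta phi x0 x1"

lemma phi_unbounded: "\<exists>x\<ge>0. phi x \<ge> M"
proof -
  obtain N where "\<forall>x\<ge>N. M \<le> phi x"
    using phi_lim by (auto simp: filterlim_at_top eventually_at_top_linorder)
  then show ?thesis by (intro exI[of _ "max N 0"]) auto
qed

lemmas pinv_phi = increasing_inverse(1)[OF continuous_on_subset[OF phi_cont] phi_strict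
    phi_unbounded phi_inv_def, simplified]
  and phi_pinv = increasing_inverse(2)[OF continuous_on_subset[OF phi_cont] phi_strict
    phi_unbounded phi_inv_def, simplified]
  and pinv_mono = increasing_inverse(3)[OF continuous_on_subset[OF phi_cont] phi_strict
    phi_unbounded phi_inv_def, simplified]
  and pinv_cont = increasing_inverse(4)[OF continuous_on_subset[OF phi_cont] phi_strict
    phi_unbounded phi_inv_def, simplified]

lemma phi_mono: "0 \<le> x \<Longrightarrow> x \<le> y \<Longrightarrow> phi x \<le> phi y"
  using strict_mono_on_leD[OF phi_strict] by auto

lemma le_pinv: "0 \<le> v \<Longrightarrow> phi v \<le> y \<Longrightarrow> v \<le> pinv y"
  using pinv_phi[of v] pinv_mono[of "phi v" y] phi_mono[of 0 v] by auto

lemma gam_nonneg: "s \<ge> x0 \<Longrightarrow> gam s \<ge> 0"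
  using phi_pinv[of s] x0_ge eta_nonneg by auto

lemma gam_pos_cont:
  assumes "s > x0" shows "gam s > 0" "isCont gam s"
proof -
  have p: "isCont pinv s" "pinv s > 0" using pinv_cont[of s] assms x0_ge by auto
  then show "gam s > 0" using eta_pos by auto
  have "isCont eta (pinv s)" by (rule continuous_on_interior[OF eta_cont]) (use p in auto)
  then have "isCont (\<lambda>s. eta (pinv s)) s" by (rule isCont_o2[OF p(1)])
  then show "isCont gam s" using eta_pos p by (intro continuous_intros) auto
qed

lemma G_integral:
  assumes "x \<ge> x0" shows "gam integrable_on {x0..x}" "G x = integral {x0..x} gam"
  using set_borel_integral_eq_integral[OF G_finite[rule_format, OF assms]] by (auto simp: G_fun_def)

lemma G_x0: "G x0 = 0" using G_integral(2)[of x0] by simp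

lemma G_nonneg: "x \<ge> x0 \<Longrightarrow> G x \<ge> 0"
  using G_integral[of x] gam_nonneg by (auto intro!: integral_nonneg)

lemma G_cont: "continuous_on {x0..X} G"
proof (cases "x0 \<le> X")
  case True
  show ?thesis
    by (rule continuous_on_eq[OF indefinite_integral_continuous_1[OF G_integral(1)[OF True]]])
       (use G_integral in auto)
qed simp

lemma G_deriv: assumes "y > x0" shows "(G has_real_derivative gam y) (at y)"
proof (rule indefinite_integral_derivative[where b="(x0+y)/2" and B="y+1" and C="G ((x0+y)/2)"])
  show "continuous_on {(x0 + y) / 2..y + 1} gam"
    by (intro continuous_at_imp_continuous_on ballI gam_pos_cont(2)) (use assms in auto)
  fix z assume z: "z \<in> {(x0 + y) / 2..y + 1}"
  have "integral {x0..(x0+y)/2} gam + integral {(x0+y)/2..z} gam = integral {x0..z} gam"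
    by (rule Henstock_Kurzweil_Integration.integral_combine) (use z assms G_integral(1)[of z] in auto)
  then show "G z = G ((x0 + y) / 2) + integral {(x0 + y) / 2..z} gam"
    using G_integral(2)[of z] G_integral(2)[of "(x0+y)/2"] z assms by auto
qed (use assms in auto)

text \<open>G is strictly increasing: its derivative gam is positive on (x0,\<infinity>).\<close>

lemma G_strict: "strict_mono_on {x0..} G"
proof (rule strict_mono_onI)
  fix y z assume yz: "y \<in> {x0..}" "z \<in> {x0..}" "y < z"
  define m where "m = (y + z) / 2"
  have der: "\<exists>d. DERIV G x :> d \<and> d > 0" if "x > x0" for x
    using G_deriv[OF that] gam_pos_cont(1)[OF that] by blast
  have "G m < G z"
    by (rule DERIV_pos_imp_increasing[of m z G]) (use yz der in \<open>auto simp: m_def\<close>)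
  moreover have "G y \<le> G m"
  proof (cases "y = x0")
    case True then show ?thesis using G_x0 G_nonneg[of m] yz by (auto simp: m_def)
  next
    case False
    then have "G y < G m"
      by (intro DERIV_pos_imp_increasing[of y m G]) (use yz der in \<open>auto simp: m_def\<close>)
    then show ?thesis by simp
  qed
  ultimately show "G y < G z" by simp
qed

text \<open>G is unbounded: otherwise monotone convergence would make the integral of gam over
  [x0,\<infinity>) finite, contradicting the hypothesis G_infinite.\<close>

lemma G_unbounded: "\<exists>x\<ge>x0. G x \<ge> M"
proof (rule ccontr)
  assume "\<not> ?thesis"
  then have bnd: "\<And>x. x \<ge> x0 \<Longrightarrow> G x < M" by force
  define S where "S n = {x0..x0 + real n}" for n :: nat
  define fn where "fn n x = ennreal (indicator (S n) x * gam x)" for n x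
  have integ: "integrable lborel (\<lambda>x. indicator (S n) x * gam x)" for n
    using G_finite[rule_format, of "x0 + real n"] by (simp add: set_integrable_def S_def)
  have meas: "fn n \<in> borel_measurable lborel" for n
    unfolding fn_def
    by (rule measurable_compose[OF borel_measurable_integrable[OF integ] measurable_ennreal])
  have inc: "incseq fn"
    by (intro incseq_SucI le_funI) (use gam_nonneg in \<open>auto simp: fn_def S_def indicator_def\<close>)
  have sup: "(SUP n. fn n x) = ennreal (gam x) * indicator {x0..} x" for x
  proof (cases "x \<ge> x0")
    case True
    have le: "fn n x \<le> ennreal (gam x)" for n
      by (auto simp: fn_def indicator_def)
    have "fn (nat \<lceil>x - x0\<rceil>) x = ennreal (gam x)"
      using True by (auto simp: fn_def S_def indicator_def) linarith
    then have "(SUP n. fn n x) = ennreal (gam x)"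
      by (intro antisym SUP_least le) (metis SUP_upper UNIV_I)
    then show ?thesis using True by simp
  qed (auto simp: fn_def S_def indicator_def)
  have int_eq: "integral\<^sup>N lborel (fn n) = ennreal (G (x0 + real n))" for n
  proof -
    have "integral\<^sup>N lborel (fn n) = ennreal (integral\<^sup>L lborel (\<lambda>x. indicator (S n) x * gam x))"
      unfolding fn_def
      by (rule nn_integral_eq_integral[OF integ]) (use gam_nonneg in \<open>auto simp: S_def indicator_def\<close>)
    then show ?thesis by (simp add: G_fun_def set_lebesgue_integral_def S_def)
  qed
  have "(\<integral>\<^sup>+ s\<in>{x0..}. ennreal (gam s) \<partial>lborel) = (SUP n. integral\<^sup>N lborel (fn n))"
    using nn_integral_monotone_convergence_SUP[OF inc meas] by (simp add: sup)
  also have "\<dots> \<le> ennreal M"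
    unfolding int_eq using bnd by (intro SUP_least ennreal_leI) (simp add: less_imp_le)
  finally show False using G_infinite by (simp add: top_unique)
qed

lemmas Gi_G = increasing_inverse(1)[OF G_cont G_strict G_unbounded G_inv_def]
  and Gi_mono = increasing_inverse(3)[OF G_cont G_strict G_unbounded G_inv_def, unfolded G_x0]
  and Gi_cont = increasing_inverse(4)[OF G_cont G_strict G_unbounded G_inv_def, unfolded G_x0]

lemma G_pos: "x > x0 \<Longrightarrow> G x > 0"
  using strict_mono_onD[OF G_strict, of x0 x] G_x0 by auto

lemma psi_pos_cont:
  assumes "y > 0" shows "psi y > 0" "isCont psi y"
proof -
  have g: "isCont Gi y" "Gi y > x0" using Gi_cont[OF assms] by auto
  have p: "isCont pinv (Gi y)" "pinv (Gi y) > 0" using pinv_cont[of "Gi y"] g x0_ge by auto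
  then show "psi y > 0" using w_pos by auto
  have "isCont w (pinv (Gi y))" by (rule continuous_on_interior[OF w_cont]) (use p in auto)
  then have "isCont (\<lambda>s. w (pinv (Gi s))) y"
    by (intro isCont_o2[OF g(1)] isCont_o2[OF p(1)])
  then show "isCont psi y" using w_pos p by (intro continuous_intros) auto
qed

lemma psi_cont_on: "0 < p \<Longrightarrow> continuous_on {p..q} psi"
  by (intro continuous_at_imp_continuous_on ballI psi_pos_cont(2)) auto

lemma Psi_as_integral:
  assumes "0 < b" "b \<le> z" "b \<le> x1"
  shows "Psi z = integral {b..z} psi - integral {b..x1} psi"
proof (cases "x1 \<le> z")
  case True
  have "Psi z = (LINT s:{x1..z}|lborel. psi s)"
    unfolding Psi_fun_def by (rule interval_integral_Icc[OF True])
  also have "\<dots> = integral {x1..z} psi"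
    by (rule lint_eq_integral(1)[OF psi_cont_on]) (use assms x1_pos in auto)
  also have "\<dots> = integral {b..z} psi - integral {b..x1} psi"
    using Henstock_Kurzweil_Integration.integral_combine[of b x1 z psi] assms True lint_eq_integral(2)[OF psi_cont_on, of b z]
    by auto
  finally show ?thesis .
next
  case False
  have "Psi z = - (LINT s:{z..x1}|lborel. psi s)"
    unfolding Psi_fun_def using interval_integral_Icc[of z x1] False
    by (subst interval_integral_endpoints_reverse) simp
  also have "\<dots> = - integral {z..x1} psi"
    by (subst lint_eq_integral(1)[OF psi_cont_on]) (use assms in auto)
  also have "\<dots> = integral {b..z} psi - integral {b..x1} psi"
    using Henstock_Kurzweil_Integration.integral_combine[of b z x1 psi] assms False lint_eq_integral(2)[OF psi_cont_on, of b x1]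
    by auto
  finally show ?thesis .
qed

lemma Psi_deriv: assumes "y > 0" shows "(Psi has_real_derivative psi y) (at y)"
proof (rule indefinite_integral_derivative[where b="min y x1 / 2" and B="y+1"
      and C="- integral {min y x1 / 2..x1} psi"])
  show "continuous_on {min y x1 / 2..y + 1} psi"
    by (rule psi_cont_on) (use assms x1_pos in auto)
  fix z assume "z \<in> {min y x1 / 2..y + 1}"
  then show "Psi z = - integral {min y x1 / 2..x1} psi + integral {min y x1 / 2..z} psi"
    using Psi_as_integral[of "min y x1 / 2" z] assms x1_pos by auto
qed (use assms x1_pos in auto)

lemma Psi_less: assumes "0 < y" "y < z" shows "Psi y < Psi z"
proof -
  have der: "\<exists>d. DERIV Psi x :> d \<and> d > 0" if "x > 0" for x
    using Psi_deriv[OF that] psi_pos_cont(1)[OF that] by blast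
  show ?thesis by (rule DERIV_pos_imp_increasing[of y z Psi]) (use assms der in auto)
qed

lemma Psi_le: "0 < y \<Longrightarrow> y \<le> z \<Longrightarrow> Psi y \<le> Psi z"
  using Psi_less[of y z] by (cases "y = z") auto

lemma Psi_isCont: "y > 0 \<Longrightarrow> isCont Psi y"
  using Psi_deriv DERIV_isCont by blast

lemma Psii_Psi: "y > 0 \<Longrightarrow> Psii (Psi y) = y"
proof -
  have "inj_on Psi {0<..}"
    by (intro strict_mono_on_imp_inj_on strict_mono_onI) (use Psi_less in auto)
  then show "y > 0 \<Longrightarrow> Psii (Psi y) = y" unfolding Psi_inv_def by (rule the_inv_into_f_f) auto
qed

lemma le_Gi_Psii:
  assumes V: "V > x0" and le: "Psi (G V) \<le> z" and z: "z \<in> Psi ` {0<..}"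
  shows "V \<le> Gi (Psii z)"
proof -
  from z obtain y where y: "y > 0" "z = Psi y" by auto
  have "G V \<le> y"
  proof (rule ccontr)
    assume "\<not> G V \<le> y"
    then have "Psi y < Psi (G V)" using Psi_less[OF y(1)] by simp
    then show False using le y by simp
  qed
  then have "Gi (G V) \<le> Gi y" using Gi_mono[OF G_nonneg, of V] V by simp
  then show ?thesis using Gi_G[of V] V y Psii_Psi by simp
qed

subsection \<open>The comparison argument\<close>

text \<open>The pointwise estimate behind the comparison: with V \<ge> phi v and Q = G V + d (d \<ge> 0),
  the rate of change psi(Q) * (gam(V) * H - g) of Psi along the comparison function is at
  most f, where H = f eta(v) w(v) + g eta(v).  Monotonicity of eta and w is used here.\<close>

lemma slope_estimate:
  assumes V: "V > x0" and v: "0 \<le> v" "v \<le> pinv V" and fg: "0 \<le> fx" "0 \<le> gx" and d: "0 \<le> d"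
  shows "psi (G V + d) * (gam V * (fx * eta v * w v + gx * eta v) - gx) \<le> fx"
proof -
  define U where "U = pinv V"
  define Q where "Q = G V + d"
  have U0: "U > 0" unfolding U_def using pinv_cont[of V] V x0_ge by auto
  have eU: "eta U > 0" "w U > 0" using U0 eta_pos w_pos by auto
  have ev: "0 \<le> eta v" "eta v \<le> eta U" "0 \<le> w v" "w v \<le> w U"
    using mono_onD[OF eta_mono, of v U] mono_onD[OF w_mono, of v U] v U0 eta_nonneg w_nonneg
    by (auto simp: U_def)
  have Q0: "Q > 0" using G_pos[OF V] d by (simp add: Q_def)
  have "gam V * (fx * eta v * w v + gx * eta v) = eta v / eta U * (fx * w v + gx)"
    by (simp add: U_def field_simps)
  also have "\<dots> \<le> 1 * (fx * w v + gx)"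
    by (rule mult_right_mono) (use ev eU fg in auto)
  finally have slope: "gam V * (fx * eta v * w v + gx * eta v) - gx \<le> fx * w U"
    using mult_left_mono[OF ev(4) fg(1)] by simp
  have "Gi (G V) \<le> Gi Q"
    by (rule Gi_mono) (use G_nonneg[of V] V d in \<open>auto simp: Q_def\<close>)
  then have "V \<le> Gi Q" using Gi_G[of V] V by simp
  then have "U \<le> pinv (Gi Q)" unfolding U_def using pinv_mono[of V "Gi Q"] V x0_ge by simp
  then have "w U \<le> w (pinv (Gi Q))"
    using mono_onD[OF w_mono, of U "pinv (Gi Q)"] U0 by auto
  then have psiQ: "psi Q \<le> 1 / w U" "psi Q > 0"
    using eU psi_pos_cont(1)[OF Q0] by (auto simp: frac_le)
  show ?thesis
  proof (cases "gam V * (fx * eta v * w v + gx * eta v) - gx \<ge> 0")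
    case True
    have "psi Q * (gam V * (fx * eta v * w v + gx * eta v) - gx) \<le> (1 / w U) * (fx * w U)"
      by (rule mult_mono) (use psiQ slope True eU fg in auto)
    then show ?thesis using eU by (simp add: Q_def)
  next
    case False
    have "psi Q * (gam V * (fx * eta v * w v + gx * eta v) - gx) \<le> 0"
      by (rule mult_nonneg_nonpos) (use psiQ(2) False in linarith)+
    then show ?thesis using fg by (simp add: Q_def)
  qed
qed

text \<open>Bihari's comparison on [0,a]: if phi (u s) \<le> c + integral over [0,s] of H for all
  s \<in> [0,a], with H = F eta(u) w(u) + Gg eta(u), then the function
  K s = Psi (G (V s) + integral over [s,a] of Gg) - integral over [0,s] of F,
  V s = c + integral over [0,s] of H, is nonincreasing, and K a \<le> K 0 is the claim.\<close>

lemma bihari_comparison: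
  fixes F Gg u :: "real \<Rightarrow> real"
  defines "H \<equiv> \<lambda>r. F r * eta (u r) * w (u r) + Gg r * eta (u r)"
  assumes a: "a \<ge> 0"
    and Fc: "continuous_on {0..a} F" and Gc: "continuous_on {0..a} Gg"
    and uc: "continuous_on {0..a} u"
    and Fn: "\<forall>s\<in>{0..a}. F s \<ge> 0" and Gn: "\<forall>s\<in>{0..a}. Gg s \<ge> 0"
    and un: "\<forall>s\<in>{0..a}. u s \<ge> 0"
    and c: "c > x0"
    and ineq: "\<forall>s\<in>{0..a}. phi (u s) \<le> c + integral {0..s} H"
  shows "Psi (G (c + integral {0..a} H)) \<le> Psi (G c + integral {0..a} Gg) + integral {0..a} F"
proof -
  have Hc: "continuous_on {0..a} H" unfolding H_def
    by (intro continuous_intros Fc Gc continuous_on_compose2[OF eta_cont uc]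
          continuous_on_compose2[OF w_cont uc]) (use un in auto)
  have Hn: "\<forall>r\<in>{0..a}. H r \<ge> 0"
    using Fn Gn un eta_nonneg w_nonneg by (auto simp: H_def)
  define V where "V x = c + integral {0..x} H" for x
  define R where "R x = integral {0..a} Gg - integral {0..x} Gg" for x
  define K where "K x = Psi (G (V x) + R x) - integral {0..x} F" for x
  have V_gt: "V x > x0" if "x \<in> {0..a}" for x
    using c integral_nonneg[OF lint_eq_integral(2)[OF continuous_on_subset[OF Hc]]] Hn that
    by (force simp: V_def)
  have R_nonneg: "R x \<ge> 0" if "x \<in> {0..a}" for x
    unfolding R_def using Gn that lint_eq_integral(2)[OF continuous_on_subset[OF Gc]]
    by (simp add: integral_subset_le)
  have K_deriv: "\<exists>D. (K has_real_derivative D) (at x within {0..a}) \<and> D \<le> 0"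
    if x: "x \<in> {0..a}" for x
  proof -
    define Q where "Q = G (V x) + R x"
    have dV: "(V has_real_derivative H x) (at x within {0..a})"
      unfolding V_def using DERIV_add[OF DERIV_const integral_has_real_derivative[OF Hc x]] by simp
    have dR: "(R has_real_derivative - Gg x) (at x within {0..a})"
      unfolding R_def using DERIV_diff[OF DERIV_const integral_has_real_derivative[OF Gc x]] by simp
    have dQ: "((\<lambda>x. G (V x) + R x) has_real_derivative gam (V x) * H x - Gg x) (at x within {0..a})"
      using DERIV_add[OF DERIV_chain'[OF dV G_deriv[OF V_gt[OF x]]] dR] by simp
    have Q0: "Q > 0" using G_pos[OF V_gt[OF x]] R_nonneg[OF x] by (simp add: Q_def)
    have "(K has_real_derivative psi Q * (gam (V x) * H x - Gg x) - F x) (at x within {0..a})"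
      unfolding K_def Q_def
      using DERIV_diff[OF DERIV_chain'[OF dQ Psi_deriv] integral_has_real_derivative[OF Fc x]] Q0
      by (simp add: Q_def mult.commute)
    moreover have "psi Q * (gam (V x) * H x - Gg x) \<le> F x"
      unfolding Q_def H_def
      by (rule slope_estimate[OF V_gt[OF x]])
         (use x un Fn Gn ineq R_nonneg le_pinv in \<open>auto simp: V_def H_def\<close>)
    ultimately show ?thesis by force
  qed
  have K_cont: "continuous_on {0..a} K"
    unfolding continuous_on_eq_continuous_within using K_deriv by (blast intro: DERIV_continuous)
  have "K a \<le> K 0"
  proof (rule DERIV_nonpos_imp_decreasing_open[OF a _ K_cont])
    fix x assume x: "0 < x" "x < a"
    have "at x within {0..a} = at x" by (rule at_within_interior) (use x in auto)
    then show "\<exists>y. DERIV K x :> y \<and> y \<le> 0" using K_deriv[of x] x by auto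
  qed
  then show ?thesis by (simp add: K_def V_def R_def)
qed

end


section \<open>The integral inequality\<close>

text \<open>The hypotheses of the theorem on f, g, c, alpha and u (those that are actually needed).\<close>

locale bihari_inequality = bihari_functions phi eta w x0 x1
  for phi eta w :: "real \<Rightarrow> real" and x0 x1 :: real +
  fixes f g :: "real \<Rightarrow> real \<Rightarrow> real" and c alpha u :: "real \<Rightarrow> real"
  assumes f_cont: "continuous_on ({0..} \<times> {0..}) (\<lambda>(t, s). f t s)"
    and f_nonneg: "\<forall>t\<ge>0. \<forall>s\<ge>0. f t s \<ge> 0"
    and f_mono: "\<forall>s\<ge>0. mono_on {0..} (\<lambda>t. f t s)"
    and g_cont: "continuous_on ({0..} \<times> {0..}) (\<lambda>(t, s). g t s)"
    and g_nonneg: "\<forall>t\<ge>0. \<forall>s\<ge>0. g t s \<ge> 0"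
    and g_mono: "\<forall>s\<ge>0. mono_on {0..} (\<lambda>t. g t s)"
    and c_cont: "continuous_on {0..} c"
    and c_mono: "mono_on {0..} c"
    and x0_less: "x0 < c 0"
    and alpha_nonneg: "\<forall>t\<ge>0. alpha t \<ge> 0"
    and alpha_le: "\<forall>t\<ge>0. alpha t \<le> t"
    and u_cont: "continuous_on {0..} u"
    and u_nonneg: "\<forall>t\<ge>0. u t \<ge> 0"
    and u_ineq: "\<forall>t\<ge>0. phi (u t) \<le> c t +
          (LINT s:{0..alpha t}|lborel. f t s * eta (u s) * w (u s) + g t s * eta (u s))"
begin

definition H :: "real \<Rightarrow> real \<Rightarrow> real" where
  "H T = (\<lambda>r. f T r * eta (u r) * w (u r) + g T r * eta (u r))"

definition z :: "real \<Rightarrow> real" where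
  "z t = Psi (G (c t) + (LINT s:{0..alpha t}|lborel. g t s)) + (LINT s:{0..alpha t}|lborel. f t s)"

lemma f_section: "T \<ge> 0 \<Longrightarrow> continuous_on {0..} (f T)"
  by (rule section_continuous[OF f_cont])

lemma g_section: "T \<ge> 0 \<Longrightarrow> continuous_on {0..} (g T)"
  by (rule section_continuous[OF g_cont])

lemma H_cont: "T \<ge> 0 \<Longrightarrow> continuous_on {0..} (H T)"
  unfolding H_def
  by (intro continuous_intros f_section g_section continuous_on_compose2[OF eta_cont u_cont]
        continuous_on_compose2[OF w_cont u_cont]) (use u_nonneg in auto)

lemma H_integrable: "T \<ge> 0 \<Longrightarrow> H T integrable_on {0..b}"
  using lint_eq_integral(2)[OF continuous_on_subset[OF H_cont]] by auto

lemma H_nonneg: "T \<ge> 0 \<Longrightarrow> r \<ge> 0 \<Longrightarrow> H T r \<ge> 0"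
  using f_nonneg g_nonneg u_nonneg eta_nonneg w_nonneg by (simp add: H_def)

lemma integrals_as_HK:
  assumes "T \<ge> 0"
  shows "(LINT s:{0..b}|lborel. f T s) = integral {0..b} (f T)"
    and "(LINT s:{0..b}|lborel. g T s) = integral {0..b} (g T)"
    and "(LINT s:{0..b}|lborel. f T s * eta (u s) * w (u s) + g T s * eta (u s))
           = integral {0..b} (H T)"
  using lint_eq_integral(1)[OF continuous_on_subset[OF f_section[OF assms]]]
    lint_eq_integral(1)[OF continuous_on_subset[OF g_section[OF assms]]]
    lint_eq_integral(1)[OF continuous_on_subset[OF H_cont[OF assms]]]
  by (auto simp: H_def)

lemma c_gt_x0: "t \<ge> 0 \<Longrightarrow> c t > x0"
  using mono_onD[OF c_mono, of 0 t] x0_less by auto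

text \<open>Freezing time at T: for s \<in> [0, alpha T] the hypothesis at time s implies the one with
  c, f, g evaluated at T and the integral extended from [0, alpha s] to [0,s].\<close>

lemma frozen_inequality:
  assumes T: "T \<ge> 0" and s: "s \<in> {0..alpha T}"
  shows "phi (u s) \<le> c T + integral {0..s} (H T)"
proof -
  have sT: "0 \<le> s" "s \<le> T" using s alpha_le T by auto
  have as: "0 \<le> alpha s" "alpha s \<le> s" using alpha_nonneg alpha_le sT by auto
  have "phi (u s) \<le> c s + integral {0..alpha s} (H s)"
    using u_ineq[rule_format, OF sT(1)] integrals_as_HK(3)[OF sT(1)] by simp
  also have "integral {0..alpha s} (H s) \<le> integral {0..alpha s} (H T)"
  proof (rule integral_le[OF H_integrable H_integrable])
    fix r assume r: "r \<in> {0..alpha s}"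
    have "f s r \<le> f T r" "g s r \<le> g T r"
      using mono_onD[OF f_mono[rule_format, of r], of s T]
        mono_onD[OF g_mono[rule_format, of r], of s T] r sT by auto
    then show "H s r \<le> H T r" unfolding H_def
      using r u_nonneg eta_nonneg w_nonneg by (intro add_mono mult_right_mono) auto
  qed (use sT in auto)
  also have "\<dots> \<le> integral {0..s} (H T)"
    using as H_integrable[OF T] H_nonneg[OF T] by (intro integral_subset_le) auto
  also have "c s \<le> c T" using mono_onD[OF c_mono] sT by auto
  ultimately show ?thesis by linarith
qed

text \<open>The bound on u T, whenever z T lies in the range of Psi: apply the comparison lemma
  on [0, alpha T] to the frozen inequality and invert Psi, G and phi.\<close>

lemma u_bound:
  assumes T: "T \<ge> 0" and zT: "z T \<in> Psi ` {0<..}"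
  shows "u T \<le> pinv (Gi (Psii (z T)))"
proof -
  define a where "a = alpha T"
  have a: "0 \<le> a" "a \<le> T" using alpha_nonneg alpha_le T by (auto simp: a_def)
  have sub: "{0..a} \<subseteq> {0..}" by auto
  define V where "V = c T + integral {0..a} (H T)"
  have V_gt: "V > x0"
    using c_gt_x0[OF T] integral_nonneg[OF H_integrable[OF T], of a] H_nonneg[OF T]
    by (simp add: V_def add_pos_nonneg)
  have z_eq: "z T = Psi (G (c T) + integral {0..a} (g T)) + integral {0..a} (f T)"
    unfolding z_def a_def using integrals_as_HK[OF T] by simp
  have "Psi (G V) \<le> z T"
    unfolding z_eq V_def H_def
  proof (rule bihari_comparison[OF a(1)])
    show "continuous_on {0..a} (f T)" by (rule continuous_on_subset[OF f_section[OF T] sub])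
    show "continuous_on {0..a} (g T)" by (rule continuous_on_subset[OF g_section[OF T] sub])
    show "continuous_on {0..a} u" by (rule continuous_on_subset[OF u_cont sub])
    show "\<forall>s\<in>{0..a}. f T s \<ge> 0" "\<forall>s\<in>{0..a}. g T s \<ge> 0" "\<forall>s\<in>{0..a}. u s \<ge> 0"
      using f_nonneg g_nonneg u_nonneg T by auto
    show "c T > x0" by (rule c_gt_x0[OF T])
    show "\<forall>s\<in>{0..a}. phi (u s) \<le> c T +
        integral {0..s} (\<lambda>r. f T r * eta (u r) * w (u r) + g T r * eta (u r))"
      using frozen_inequality[OF T] by (simp add: a_def H_def)
  qed
  then have V_le: "V \<le> Gi (Psii (z T))" by (rule le_Gi_Psii[OF V_gt _ zT])
  have "phi (u T) \<le> V"
    using u_ineq[rule_format, OF T] integrals_as_HK(3)[OF T] by (simp add: V_def a_def)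
  then have "u T \<le> pinv V" by (rule le_pinv[OF u_nonneg[rule_format, OF T]])
  also have "\<dots> \<le> pinv (Gi (Psii (z T)))"
    using pinv_mono[of V] V_gt x0_ge V_le by simp
  finally show ?thesis .
qed

text \<open>Near t = 0 the argument z t lies in the range of Psi: it is at least Psi p0 with
  p0 = G (c 0) > 0, and it tends to Psi p0, so for small t it stays below Psi (p0 + 1);
  by the intermediate value theorem it is then a value of Psi on [p0, p0 + 1].\<close>

lemma z_in_range_near_0: "\<exists>\<tau>>0. \<forall>t\<in>{0..\<tau>}. z t \<in> Psi ` {0<..}"
proof -
  define p0 where "p0 = G (c 0)"
  define Af where "Af t = integral {0..alpha t} (f t)" for t
  define Ag where "Ag t = integral {0..alpha t} (g t)" for t
  have p0: "p0 > 0" unfolding p0_def by (rule G_pos[OF x0_less])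
  have z_eq: "z t = Psi (G (c t) + Ag t) + Af t" if "t \<ge> 0" for t
    unfolding z_def Af_def Ag_def using integrals_as_HK[OF that] by simp
  note Af = integral_upto_alpha_vanishes[OF f_cont f_nonneg f_mono alpha_nonneg alpha_le,
      folded Af_def]
  note Ag = integral_upto_alpha_vanishes[OF g_cont g_nonneg g_mono alpha_nonneg alpha_le,
      folded Ag_def]
  have "(c \<longlongrightarrow> c 0) (at 0 within {0..})"
    using c_cont unfolding continuous_on_def by (rule bspec) simp
  then have "((\<lambda>t. G (c t)) \<longlongrightarrow> p0) (at 0 within {0..})"
    unfolding p0_def by (rule isCont_tendsto_compose[OF DERIV_isCont[OF G_deriv[OF x0_less]]])
  then have "((\<lambda>t. G (c t) + Ag t) \<longlongrightarrow> p0) (at 0 within {0..})"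
    using tendsto_add[OF _ Ag(2)] by simp
  then have "((\<lambda>t. Psi (G (c t) + Ag t) + Af t) \<longlongrightarrow> Psi p0) (at 0 within {0..})"
    using tendsto_add[OF isCont_tendsto_compose[OF Psi_isCont[OF p0]] Af(2)] by simp
  moreover have Psi_p0: "Psi p0 < Psi (p0 + 1)" by (rule Psi_less) (use p0 in auto)
  ultimately have "\<forall>\<^sub>F t in at 0 within {0..}. Psi (G (c t) + Ag t) + Af t < Psi (p0 + 1)"
    by (rule order_tendstoD(2))
  then obtain d where d: "d > 0" and below: "\<And>t. t \<in> {0..} \<Longrightarrow> t \<noteq> 0 \<Longrightarrow> dist t 0 < d \<Longrightarrow>
      Psi (G (c t) + Ag t) + Af t < Psi (p0 + 1)"
    unfolding eventually_at by blast
  have "z t \<in> Psi ` {0<..}" if t: "t \<in> {0..d/2}" for t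
  proof -
    have "alpha 0 = 0" using alpha_nonneg alpha_le by force
    then have "z 0 = Psi p0" using z_eq[of 0] by (simp add: Af_def Ag_def p0_def)
    then have upper: "z t \<le> Psi (p0 + 1)"
      using below[of t] t d z_eq[of t] Psi_p0 by (cases "t = 0") (auto simp: dist_real_def)
    have "G (c 0) \<le> G (c t)"
      using strict_mono_on_leD[OF G_strict] c_gt_x0[of 0] c_gt_x0[of t] mono_onD[OF c_mono, of 0 t] t
      by auto
    then have "p0 \<le> G (c t) + Ag t" using Ag(1)[of t] t by (simp add: p0_def)
    then have lower: "Psi p0 \<le> z t" using Psi_le[OF p0] Af(1)[of t] z_eq[of t] t by fastforce
    have "continuous_on {p0..p0 + 1} Psi"
      using p0 by (intro continuous_at_imp_continuous_on ballI Psi_isCont) auto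
    then obtain y where "p0 \<le> y" "Psi y = z t"
      using IVT'[of Psi p0 "z t" "p0 + 1", OF lower upper] by auto
    then show ?thesis using p0 by (intro image_eqI[of _ _ y]) auto
  qed
  then show ?thesis using d by (intro exI[of _ "d/2"]) auto
qed

end


theorem theorem1:
  fixes f g :: "real \<Rightarrow> real \<Rightarrow> real"
    and phi c eta w alpha u :: "real \<Rightarrow> real"
    and x0 x1 :: real
  assumes f_cont: "continuous_on ({0..} \<times> {0..}) (\<lambda>(t, s). f t s)"
    and f_nonneg: "\<forall>t\<ge>0. \<forall>s\<ge>0. f t s \<ge> 0"
    and f_mono: "\<forall>s\<ge>0. mono_on {0..} (\<lambda>t. f t s)"
    and g_cont: "continuous_on ({0..} \<times> {0..}) (\<lambda>(t, s). g t s)"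
    and g_nonneg: "\<forall>t\<ge>0. \<forall>s\<ge>0. g t s \<ge> 0"
    and g_mono: "\<forall>s\<ge>0. mono_on {0..} (\<lambda>t. g t s)"
    and phi_cont: "continuous_on {0..} phi"
    and phi_nonneg: "\<forall>x\<ge>0. phi x \<ge> 0"
    and phi_strict: "strict_mono_on {0..} phi"
    and phi_lim: "filterlim phi at_top at_top"
    and c_cont: "continuous_on {0..} c"
    and c_pos: "\<forall>t\<ge>0. c t > 0"
    and c_mono: "mono_on {0..} c"
    and eta_cont: "continuous_on {0..} eta"
    and eta_nonneg: "\<forall>x\<ge>0. eta x \<ge> 0"
    and eta_mono: "mono_on {0..} eta"
    and eta_pos: "\<forall>x>0. eta x > 0"
    and w_cont: "continuous_on {0..} w"
    and w_nonneg: "\<forall>x\<ge>0. w x \<ge> 0"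
    and w_mono: "mono_on {0..} w"
    and w_pos: "\<forall>x>0. w x > 0"
    and x0_ge: "phi 0 \<le> x0"
    and x0_less: "x0 < c 0"
    and G_finite: "\<forall>x\<ge>x0. set_integrable lborel {x0..x} (\<lambda>s. 1 / eta (phi_inv phi s))"
    and G_infinite: "(\<integral>\<^sup>+ s\<in>{x0..}. ennreal (1 / eta (phi_inv phi s)) \<partial>lborel) = \<infinity>"
    and x1_pos: "x1 > 0"
    and alpha_C1: "\<exists>alpha'. continuous_on {0..} alpha' \<and>
                     (\<forall>t\<ge>0. (alpha has_real_derivative alpha' t) (at t within {0..}))"
    and alpha_nonneg: "\<forall>t\<ge>0. alpha t \<ge> 0"
    and alpha_mono: "mono_on {0..} alpha"
    and alpha_le: "\<forall>t\<ge>0. alpha t \<le> t"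
    and u_cont: "continuous_on {0..} u"
    and u_nonneg: "\<forall>t\<ge>0. u t \<ge> 0"
    and u_ineq: "\<forall>t\<ge>0. phi (u t) \<le> c t +
          (LINT s:{0..alpha t}|lborel. f t s * eta (u s) * w (u s) + g t s * eta (u s))"
  shows "\<exists>\<tau>>0. \<forall>t\<in>{0..\<tau>}.
     (let p = G_fun eta phi x0 (c t) + (LINT s:{0..alpha t}|lborel. g t s);
          z = Psi_fun w eta phi x0 x1 p + (LINT s:{0..alpha t}|lborel. f t s)
      in z \<in> Psi_fun w eta phi x0 x1 ` {0<..} \<and>
         u t \<le> phi_inv phi (G_inv eta phi x0 (Psi_inv w eta phi x0 x1 z)))"
proof -
  interpret bihari_inequality phi eta w x0 x1 f g c alpha u
    by unfold_locales
      (fact phi_cont phi_strict phi_lim eta_cont eta_nonneg eta_mono eta_pos w_cont w_mono w_pos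
        w_nonneg x0_ge G_finite G_infinite x1_pos f_cont f_nonneg f_mono g_cont g_nonneg g_mono
        c_cont c_mono x0_less alpha_nonneg alpha_le u_cont u_nonneg u_ineq)+
  obtain \<tau> where "\<tau> > 0" and in_range: "\<forall>t\<in>{0..\<tau>}. z t \<in> Psi ` {0<..}"
    using z_in_range_near_0 by blast
  then show ?thesis
    using u_bound in_range unfolding Let_def z_def[symmetric] by auto
qed

end
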